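(* Let $A$ be a profile and $k$ a committee size such that $|A_i|\le 2$ for all $i\in N_A$ and $|N_A(c)|=|N_A(d)|\le n/k$ for all $c,d\in C$. Then the method of equal shares (with Phase 2 as described) and sequential Phragmén select exactly the same sets of valid candidate sequences on $(A,k)$; in particular they return the same set of winning committees.
   Context: Candidates form a finite set $C$, $|C|=m>1$. An approval profile $A$ has a nonempty finite voter set $N_A$, each $i\in N_A$ having a nonempty ballot $A_i\subseteq C$; $N_A(c)=\{i\in N_A:c\in A_i\}$, $n=|N_A|$. Both rules add candidates one at a time and return all committees obtainable under some tie-breaking. Sequential Phragmén: every voter's budget starts at 0 and increases continuously at unit rate; as soon as the supporters $N_A(c)$ of some unchosen candidate $c$ have total budget 1, such a $c$ (any, in case of ties) is bought and its supporters' budgets are reset to 0; continue until $k$ candidates are bought. Method of equal shares: each voter starts with budget $x_0(i)=k/n$; every candidate costs 1. Phase 1: with budgets $x_r$ after buying $r$ candidates, let $C_r$ be the unchosen candidates $c$ with $\sum_{i\in N_A(c)}x_r(i)\ge1$; if $C_r\neq\emptyset$, buy any $c\in C_r$ minimizing $\rho(c)$, where $\sum_{i\in N_A(c)}\min(\rho(c),x_r(i))=1$, and set $x_{r+1}(i)=x_r(i)-\min(\rho(c),x_r(i))$ for $i\in N_A(c)$, $x_{r+1}(i)=x_r(i)$ otherwise; stop when $C_r=\emptyset$. Phase 2 (if fewer than $k$ bought): run the sequential Phragmén process above, but with voters starting from their remaining Phase 1 budgets instead of 0. *)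

theory Defs
  imports Main "HOL-Library.Multiset" Complex_Main
begin

text \<open>Approval profiles: a voter set N (of type 'v set), ballots A :: 'v => 'c set,
  candidate set C.  Budgets are functions 'v => real (values outside N are irrelevant).\<close>

definition supporters :: "'v set \<Rightarrow> ('v \<Rightarrow> 'c set) \<Rightarrow> 'c \<Rightarrow> 'v set" where
  "supporters N A c = {i \<in> N. c \<in> A i}"

text \<open>One step of the (continuous) sequential Phragmen process: from budgets b, with the
  candidates in W already bought, after waiting time t the candidate c is the first
  (possibly tied) unchosen candidate whose supporters reach total budget 1; then its
  supporters are reset to 0 and all other voters have gained t.\<close>
definition phr_step ::
  "'v set \<Rightarrow> ('v \<Rightarrow> 'c set) \<Rightarrow> 'c set \<Rightarrow> 'c list \<Rightarrow> ('v \<Rightarrow> real) \<Rightarrow> 'c \<Rightarrow> ('v \<Rightarrow> real) \<Rightarrow> bool" where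
  "phr_step N A C W b c b' \<longleftrightarrow>
     c \<in> C - set W \<and>
     (\<exists>t\<ge>0. (\<Sum>i\<in>supporters N A c. b i + t) \<ge> 1 \<and>
        (\<forall>d\<in>C - set W. \<forall>s. 0 \<le> s \<and> s < t \<longrightarrow> (\<Sum>i\<in>supporters N A d. b i + s) < 1) \<and>
        b' = (\<lambda>i. if i \<in> supporters N A c then 0 else b i + t))"

inductive phr_run ::
  "'v set \<Rightarrow> ('v \<Rightarrow> 'c set) \<Rightarrow> 'c set \<Rightarrow> ('v \<Rightarrow> real) \<Rightarrow> 'c list \<Rightarrow> 'c list \<Rightarrow> ('v \<Rightarrow> real) \<Rightarrow> bool"
  for N A C b0 W0 where
  phr_start: "phr_run N A C b0 W0 W0 b0"
| phr_next: "phr_run N A C b0 W0 W b \<Longrightarrow> phr_step N A C W b c b' \<Longrightarrow> phr_run N A C b0 W0 (W @ [c]) b'"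

definition phragmen_seqs :: "'v set \<Rightarrow> ('v \<Rightarrow> 'c set) \<Rightarrow> 'c set \<Rightarrow> nat \<Rightarrow> 'c list set" where
  "phragmen_seqs N A C k = {W. length W = k \<and> (\<exists>b. phr_run N A C (\<lambda>_. 0) [] W b)}"

definition mes_rho :: "('v \<Rightarrow> real) \<Rightarrow> 'v set \<Rightarrow> real" where
  "mes_rho x S = (LEAST \<rho>. (\<Sum>i\<in>S. min \<rho> (x i)) = 1)"

definition mes_affordable ::
  "'v set \<Rightarrow> ('v \<Rightarrow> 'c set) \<Rightarrow> 'c set \<Rightarrow> 'c list \<Rightarrow> ('v \<Rightarrow> real) \<Rightarrow> 'c set" where
  "mes_affordable N A C W x = {c \<in> C - set W. (\<Sum>i\<in>supporters N A c. x i) \<ge> 1}"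

definition mes_step ::
  "'v set \<Rightarrow> ('v \<Rightarrow> 'c set) \<Rightarrow> 'c set \<Rightarrow> 'c list \<Rightarrow> ('v \<Rightarrow> real) \<Rightarrow> 'c \<Rightarrow> ('v \<Rightarrow> real) \<Rightarrow> bool" where
  "mes_step N A C W x c x' \<longleftrightarrow>
     c \<in> mes_affordable N A C W x \<and>
     (\<forall>d\<in>mes_affordable N A C W x.
        mes_rho x (supporters N A c) \<le> mes_rho x (supporters N A d)) \<and>
     x' = (\<lambda>i. if i \<in> supporters N A c
               then x i - min (mes_rho x (supporters N A c)) (x i) else x i)"

inductive mes1_run ::
  "'v set \<Rightarrow> ('v \<Rightarrow> 'c set) \<Rightarrow> 'c set \<Rightarrow> nat \<Rightarrow> 'c list \<Rightarrow> ('v \<Rightarrow> real) \<Rightarrow> bool"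
  for N A C k where
  mes1_start: "mes1_run N A C k [] (\<lambda>_. real k / real (card N))"
| mes1_next: "mes1_run N A C k W x \<Longrightarrow> mes_step N A C W x c x' \<Longrightarrow> mes1_run N A C k (W @ [c]) x'"

text \<open>Valid candidate sequences of the method of equal shares (Phase 1 until no candidate
  is affordable, then Phase 2 = Phragmen from the remaining budgets until k are bought).\<close>
definition mes_seqs :: "'v set \<Rightarrow> ('v \<Rightarrow> 'c set) \<Rightarrow> 'c set \<Rightarrow> nat \<Rightarrow> 'c list set" where
  "mes_seqs N A C k = {W. length W = k \<and>
     (\<exists>W1 x b. mes1_run N A C k W1 x \<and> mes_affordable N A C W1 x = {} \<and>
               phr_run N A C x W1 W b)}"

end

theory Submission imports Defs begin

text \<open>Every candidate has the same number s \<le> n/k of supporters. Sequential Phragmen started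
  from any constant budget in [0, 1/s] makes its first purchase exactly when all budgets reach
  1/s, so its runs do not depend on that constant. If s k < n, the initial budget k/n affords
  nothing, Phase 1 is empty and the method of equal shares is Phragmen from k/n. If s k = n,
  the initial budget is 1/s: a candidate is affordable exactly when none of its supporters has
  paid yet, it then costs each supporter 1/s, and these purchases are precisely the Phragmen
  steps with waiting time 0.\<close>

lemma phr_run_trans:
  "phr_run N A C x W1 W b \<Longrightarrow> phr_run N A C b0 W0 W1 x \<Longrightarrow> phr_run N A C b0 W0 W b"
  by (induction rule: phr_run.induct) (auto intro: phr_run.intros)

lemma phr_run_cases_first:
  "phr_run N A C b0 W0 W b \<Longrightarrow>
   (W = W0 \<and> b = b0) \<or> (\<exists>c b1. phr_step N A C W0 b0 c b1 \<and> phr_run N A C b1 (W0 @ [c]) W b)"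
  by (induction rule: phr_run.induct) (auto intro: phr_run.intros)

lemma phr_run_step_run:
  assumes "phr_step N A C W0 b0 c b1" and "phr_run N A C b1 (W0 @ [c]) W b"
  shows "phr_run N A C b0 W0 W b"
  using assms(2) phr_run.phr_next[OF phr_run.phr_start assms(1)] by (rule phr_run_trans)

definition phr_seqs_from :: "'v set \<Rightarrow> ('v \<Rightarrow> 'c set) \<Rightarrow> 'c set \<Rightarrow> nat \<Rightarrow> real \<Rightarrow> 'c list set" where
  "phr_seqs_from N A C k c0 = {W. length W = k \<and> (\<exists>b. phr_run N A C (\<lambda>_. c0) [] W b)}"

lemma phragmen_seqs_eq_phr_seqs_from_0: "phragmen_seqs N A C k = phr_seqs_from N A C k 0"
  by (simp add: phragmen_seqs_def phr_seqs_from_def)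

lemma mes1_run_no_affordable_start:
  assumes "mes_affordable N A C [] (\<lambda>_. real k / real (card N)) = {}"
  shows "mes1_run N A C k W x \<Longrightarrow> W = [] \<and> x = (\<lambda>_. real k / real (card N))"
  by (induction rule: mes1_run.induct) (use assms in \<open>auto simp: mes_step_def\<close>)

locale equal_support =
  fixes N :: "'v set" and A :: "'v \<Rightarrow> 'c set" and C :: "'c set" and s :: nat
  assumes finite_voters: "finite N"
    and card_supporters: "c \<in> C \<Longrightarrow> card (supporters N A c) = s"
    and support_pos: "s \<ge> 1"
begin

declare card_supporters [simp]

definition share :: real where "share = 1 / real s"

lemma share_pos: "share > 0"
  using support_pos by (simp add: share_def)

lemma support_mult_share: "real s * share = 1"
  using support_pos by (simp add: share_def)

lemma finite_supporters: "finite (supporters N A c)"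
  using finite_voters by (simp add: supporters_def)

lemma sum_supporters_const: "c \<in> C \<Longrightarrow> (\<Sum>i\<in>supporters N A c. a) = real s * a"
  by simp

lemma sum_supporters_const_less_1:
  assumes "c \<in> C" "a < share"
  shows "(\<Sum>i\<in>supporters N A c. a) < 1"
proof -
  have "real s * a < real s * share"
    using assms(2) support_pos by simp
  then show ?thesis
    using support_mult_share card_supporters[OF assms(1)] by simp
qed

lemma phr_step_from_const:
  assumes "0 \<le> c0" "c0 \<le> share"
  shows "phr_step N A C [] (\<lambda>_. c0) c b' \<longleftrightarrow>
         c \<in> C \<and> b' = (\<lambda>i. if i \<in> supporters N A c then 0 else share)"
proof
  assume "phr_step N A C [] (\<lambda>_. c0) c b'"
  then obtain t where c: "c \<in> C" and "t \<ge> 0"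
    and reached: "(\<Sum>i\<in>supporters N A c. c0 + t) \<ge> 1"
    and before: "\<forall>d\<in>C. \<forall>t'. 0 \<le> t' \<and> t' < t \<longrightarrow> (\<Sum>i\<in>supporters N A d. c0 + t') < 1"
    and b': "b' = (\<lambda>i. if i \<in> supporters N A c then 0 else c0 + t)"
    by (auto simp: phr_step_def)
  have "\<not> c0 + t < share"
    using reached sum_supporters_const_less_1[OF c] by fastforce
  moreover have "\<not> share < c0 + t"
  proof
    assume "share < c0 + t"
    then have "(\<Sum>i\<in>supporters N A c. c0 + (share - c0)) < 1"
      using before c assms(2) by (intro before[rule_format]) auto
    then show False
      using support_mult_share card_supporters[OF c] by simp
  qed
  ultimately show "c \<in> C \<and> b' = (\<lambda>i. if i \<in> supporters N A c then 0 else share)"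
    using c b' by auto
next
  assume "c \<in> C \<and> b' = (\<lambda>i. if i \<in> supporters N A c then 0 else share)"
  then show "phr_step N A C [] (\<lambda>_. c0) c b'"
    unfolding phr_step_def using assms
    by (intro conjI exI[of _ "share - c0"] ballI allI impI sum_supporters_const_less_1)
       (auto simp: support_mult_share)
qed

lemma phr_run_const_start_swap:
  assumes "0 \<le> c0" "c0 \<le> share" "0 \<le> c1" "c1 \<le> share"
    and "phr_run N A C (\<lambda>_. c0) [] W b" "W \<noteq> []"
  shows "phr_run N A C (\<lambda>_. c1) [] W b"
proof -
  obtain c b1 where "phr_step N A C [] (\<lambda>_. c0) c b1" and run: "phr_run N A C b1 [c] W b"
    using phr_run_cases_first[OF assms(5)] assms(6) by auto
  then have "phr_step N A C [] (\<lambda>_. c1) c b1"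
    using phr_step_from_const[OF assms(1,2)] phr_step_from_const[OF assms(3,4)] by simp
  then show ?thesis
    using run by (simp add: phr_run_step_run)
qed

definition covered :: "'c list \<Rightarrow> 'v set" where
  "covered W = \<Union> (supporters N A ` set W)"

text \<open>The state of Phase 1 when the initial budget is exactly 1/s: the bought candidates have
  pairwise disjoint supporters, who have spent everything, and nobody else has spent anything.\<close>
definition phase1_state :: "'c list \<Rightarrow> ('v \<Rightarrow> real) \<Rightarrow> bool" where
  "phase1_state W x \<longleftrightarrow> distinct W \<and> set W \<subseteq> C \<and>
     (\<forall>c\<in>set W. \<forall>d\<in>set W. c \<noteq> d \<longrightarrow> supporters N A c \<inter> supporters N A d = {}) \<and>
     x = (\<lambda>i. if i \<in> covered W then 0 else share)"

lemma affordable_disjoint_covered: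
  assumes state: "phase1_state W x" and c: "c \<in> C"
    and affordable: "(\<Sum>i\<in>supporters N A c. x i) \<ge> 1"
  shows "supporters N A c \<inter> covered W = {}"
proof (rule ccontr)
  assume "supporters N A c \<inter> covered W \<noteq> {}"
  then obtain i where i: "i \<in> supporters N A c" "i \<in> covered W" by blast
  have "(\<Sum>j\<in>supporters N A c. x j) = x i + (\<Sum>j\<in>supporters N A c - {i}. x j)"
    by (rule sum.remove[OF finite_supporters i(1)])
  also have "\<dots> \<le> 0 + real (card (supporters N A c - {i})) * share"
    using state i share_pos by (intro add_mono sum_bounded_above) (auto simp: phase1_state_def)
  also have "\<dots> = real s * share - share"
    using card_supporters[OF c] i(1) finite_supporters support_pos by (simp add: of_nat_diff algebra_simps)
  finally show False
    using affordable share_pos support_mult_share by simp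
qed

lemma affordable_full_budgets:
  assumes "phase1_state W x" "c \<in> C" "(\<Sum>i\<in>supporters N A c. x i) \<ge> 1"
  shows "\<forall>i\<in>supporters N A c. x i = share"
  using affordable_disjoint_covered[OF assms] assms(1) by (auto simp: phase1_state_def)

lemma mes_rho_full_budgets:
  assumes full: "\<forall>i\<in>supporters N A c. x i = share" and c: "c \<in> C"
  shows "mes_rho x (supporters N A c) = share"
proof -
  have sum_eq: "(\<Sum>i\<in>supporters N A c. min r (x i)) = real s * min r share" for r
    using full by (simp add: sum_supporters_const[OF c, symmetric] cong: sum.cong)
  show ?thesis
    unfolding mes_rho_def sum_eq
  proof (rule Least_equality)
    show "real s * min share share = 1"
      by (simp add: support_mult_share)
  next
    fix r assume r: "real s * min r share = 1"
    show "share \<le> r"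
    proof (rule ccontr)
      assume "\<not> share \<le> r"
      then have "real s * min r share < real s * share"
        using support_pos by simp
      then show False
        using r support_mult_share by simp
    qed
  qed
qed

lemma mes_step_resets_supporters:
  assumes "phase1_state W x" "mes_step N A C W x c x'"
  shows "x' = (\<lambda>i. if i \<in> supporters N A c then 0 else x i)"
proof -
  have "c \<in> C" "(\<Sum>i\<in>supporters N A c. x i) \<ge> 1"
    using assms(2) by (auto simp: mes_step_def mes_affordable_def)
  note full = affordable_full_budgets[OF assms(1) this]
  show ?thesis
    using assms(2) full mes_rho_full_budgets[OF full \<open>c \<in> C\<close>] by (auto simp: mes_step_def)
qed

lemma mes_step_phase1_state:
  assumes state: "phase1_state W x" and step: "mes_step N A C W x c x'"
  shows "phase1_state (W @ [c]) x'"
proof -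
  have c: "c \<in> C" "c \<notin> set W" and affordable: "(\<Sum>i\<in>supporters N A c. x i) \<ge> 1"
    using step by (auto simp: mes_step_def mes_affordable_def)
  have "supporters N A c \<inter> covered W = {}"
    using affordable_disjoint_covered[OF state c(1) affordable] .
  then show ?thesis
    using state c mes_step_resets_supporters[OF state step]
    by (auto simp: phase1_state_def covered_def)
qed

lemma mes_step_imp_phr_step:
  assumes state: "phase1_state W x" and step: "mes_step N A C W x c x'"
  shows "phr_step N A C W x c x'"
  unfolding phr_step_def mes_step_resets_supporters[OF state step]
  using step by (intro conjI exI[of _ 0]) (auto simp: mes_step_def mes_affordable_def)

text \<open>While some candidate is affordable, Phragmen cannot wait, so it buys an affordable
  candidate, and all affordable candidates have the same price 1/s.\<close>
lemma phr_step_imp_mes_step: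
  assumes state: "phase1_state W x" and d: "d \<in> mes_affordable N A C W x"
    and step: "phr_step N A C W x c x'"
  shows "mes_step N A C W x c x'"
proof -
  from step obtain t where c: "c \<in> C - set W" and "t \<ge> 0"
    and reached: "(\<Sum>i\<in>supporters N A c. x i + t) \<ge> 1"
    and before: "\<forall>d\<in>C - set W. \<forall>t'. 0 \<le> t' \<and> t' < t \<longrightarrow> (\<Sum>i\<in>supporters N A d. x i + t') < 1"
    and x': "x' = (\<lambda>i. if i \<in> supporters N A c then 0 else x i + t)"
    by (auto simp: phr_step_def)
  have "t = 0"
    using before d \<open>t \<ge> 0\<close> by (force simp: mes_affordable_def)
  then have c_affordable: "c \<in> mes_affordable N A C W x"
    using c reached by (simp add: mes_affordable_def)
  have price: "mes_rho x (supporters N A e) = share" if "e \<in> mes_affordable N A C W x" for e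
    using that affordable_full_budgets[OF state] mes_rho_full_budgets
    by (auto simp: mes_affordable_def)
  show ?thesis
    unfolding mes_step_def
    using c_affordable price[OF c_affordable] price x' \<open>t = 0\<close>
      affordable_full_budgets[OF state] by (auto simp: mes_affordable_def)
qed

lemma phase1_state_exhausted:
  assumes state: "phase1_state W x" and all_spent: "length W * s = card N"
  shows "mes_affordable N A C W x = {}"
proof (rule ccontr)
  assume "mes_affordable N A C W x \<noteq> {}"
  then obtain d where d: "d \<in> C" and "(\<Sum>i\<in>supporters N A d. x i) \<ge> 1"
    by (auto simp: mes_affordable_def)
  then have disjoint: "supporters N A d \<inter> covered W = {}"
    by (rule affordable_disjoint_covered[OF state])
  have "card (covered W) = (\<Sum>c\<in>set W. card (supporters N A c))"
    unfolding covered_def using state finite_supporters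
    by (intro card_UN_disjoint) (auto simp: phase1_state_def)
  also have "\<dots> = card N"
    using state all_spent card_supporters by (simp add: phase1_state_def distinct_card subset_eq)
  finally have "covered W = N"
    using finite_voters by (intro card_subset_eq) (auto simp: covered_def supporters_def)
  moreover have "supporters N A d \<noteq> {}"
    using card_supporters[OF d] support_pos by auto
  ultimately show False
    using disjoint by (auto simp: supporters_def)
qed

lemma mes1_run_phase1_state:
  assumes "real k / real (card N) = share"
  shows "mes1_run N A C k W x \<Longrightarrow> phase1_state W x \<and> phr_run N A C (\<lambda>_. share) [] W x"
proof (induction rule: mes1_run.induct)
  case mes1_start
  then show ?case
    using assms by (auto simp: phase1_state_def covered_def intro: phr_run.intros)
next
  case (mes1_next W x c x')
  then show ?case
    using mes_step_phase1_state mes_step_imp_phr_step by (blast intro: phr_run.intros)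
qed

lemma phr_run_splits_into_phases:
  assumes start: "real k / real (card N) = share"
  shows "phr_run N A C (\<lambda>_. share) [] W b \<Longrightarrow> mes1_run N A C k W b \<or>
    (\<exists>W1 x. mes1_run N A C k W1 x \<and> mes_affordable N A C W1 x = {} \<and> phr_run N A C x W1 W b)"
proof (induction rule: phr_run.induct)
  case phr_start
  then show ?case
    using mes1_run.mes1_start[of N A C k] start by simp
next
  case (phr_next W b c b')
  from phr_next.IH show ?case
  proof
    assume phase1: "mes1_run N A C k W b"
    show ?case
    proof (cases "mes_affordable N A C W b = {}")
      case True
      then show ?thesis
        using phase1 phr_run.phr_next[OF phr_run.phr_start phr_next.hyps(2)] by blast
    next
      case False
      then obtain d where "d \<in> mes_affordable N A C W b" by blast
      then have "mes_step N A C W b c b'"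
        using phr_step_imp_mes_step mes1_run_phase1_state[OF start phase1] phr_next.hyps(2) by blast
      then show ?thesis
        using mes1_run.mes1_next[OF phase1] by blast
    qed
  next
    assume "\<exists>W1 x. mes1_run N A C k W1 x \<and> mes_affordable N A C W1 x = {} \<and> phr_run N A C x W1 W b"
    then show ?case
      using phr_next.hyps(2) by (blast intro: phr_run.phr_next)
  qed
qed

end

locale committee_setting = equal_support +
  fixes k :: nat
  assumes committee_pos: "k > 0" and support_le_quota: "s * k \<le> card N"
begin

lemma voters_pos: "card N > 0"
  using committee_pos support_pos support_le_quota by (metis le_0_eq mult_is_0 not_gr0 not_one_le_zero)

lemma start_budget_le_share: "real k / real (card N) \<le> share"
proof -
  have "real s * real k \<le> real (card N)"
    using support_le_quota by (metis of_nat_le_iff of_nat_mult)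
  then show ?thesis
    using voters_pos support_pos by (simp add: share_def field_simps)
qed

lemma start_budget_eq_share:
  assumes "s * k = card N"
  shows "real k / real (card N) = share"
proof -
  have "real (card N) = real s * real k"
    by (simp flip: assms)
  then show ?thesis
    using support_pos committee_pos by (simp add: share_def)
qed

lemma phr_seqs_from_const_start_eq:
  assumes "0 \<le> c0" "c0 \<le> share" "0 \<le> c1" "c1 \<le> share"
  shows "phr_seqs_from N A C k c0 = phr_seqs_from N A C k c1"
proof -
  have "phr_seqs_from N A C k a \<subseteq> phr_seqs_from N A C k b"
    if "0 \<le> a" "a \<le> share" "0 \<le> b" "b \<le> share" for a b
    using committee_pos phr_run_const_start_swap[OF that] by (auto simp: phr_seqs_from_def)
  then show ?thesis
    using assms by blast
qed

lemma mes_seqs_undersubscribed: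
  assumes "s * k < card N"
  shows "mes_seqs N A C k = phr_seqs_from N A C k (real k / real (card N))"
proof -
  have "real s * real k < real (card N)"
    using assms by (metis of_nat_less_iff of_nat_mult)
  then have "real k / real (card N) < share"
    using voters_pos support_pos by (simp add: share_def field_simps)
  then have nothing_affordable: "mes_affordable N A C [] (\<lambda>_. real k / real (card N)) = {}"
    using sum_supporters_const_less_1 by (force simp: mes_affordable_def simp del: sum_constant)
  show ?thesis
    unfolding mes_seqs_def phr_seqs_from_def
    using mes1_run_no_affordable_start[OF nothing_affordable] nothing_affordable
      mes1_run.mes1_start[of N A C k] by blast
qed

lemma mes_seqs_exact:
  assumes exact: "s * k = card N"
  shows "mes_seqs N A C k = phr_seqs_from N A C k share"
proof -
  have start: "real k / real (card N) = share"
    using exact by (rule start_budget_eq_share)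
  show ?thesis
  proof (intro set_eqI iffI)
    fix W assume "W \<in> mes_seqs N A C k"
    then show "W \<in> phr_seqs_from N A C k share"
      using mes1_run_phase1_state[OF start] phr_run_trans
      by (fastforce simp: mes_seqs_def phr_seqs_from_def)
  next
    fix W assume "W \<in> phr_seqs_from N A C k share"
    then obtain b where len: "length W = k" and run: "phr_run N A C (\<lambda>_. share) [] W b"
      by (auto simp: phr_seqs_from_def)
    from phr_run_splits_into_phases[OF start run] show "W \<in> mes_seqs N A C k"
    proof
      assume phase1: "mes1_run N A C k W b"
      then have "mes_affordable N A C W b = {}"
        using mes1_run_phase1_state[OF start] phase1_state_exhausted len exact
        by (simp add: mult.commute)
      then show ?thesis
        unfolding mes_seqs_def using len phase1 phr_run.phr_start[of N A C b W] by blast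
    qed (use len in \<open>auto simp: mes_seqs_def\<close>)
  qed
qed

lemma mes_seqs_eq_phragmen_seqs: "mes_seqs N A C k = phragmen_seqs N A C k"
proof -
  have "mes_seqs N A C k = phr_seqs_from N A C k (real k / real (card N))"
  proof (cases "s * k < card N")
    case True
    then show ?thesis
      by (rule mes_seqs_undersubscribed)
  next
    case False
    then have "s * k = card N"
      using support_le_quota by simp
    then show ?thesis
      using mes_seqs_exact start_budget_eq_share by simp
  qed
  also have "\<dots> = phr_seqs_from N A C k 0"
    using start_budget_le_share share_pos by (intro phr_seqs_from_const_start_eq) auto
  finally show ?thesis
    by (simp add: phragmen_seqs_eq_phr_seqs_from_0)
qed

end

theorem mainTheorem6:
  fixes N :: "'v set" and A :: "'v \<Rightarrow> 'c set" and C :: "'c set" and k :: nat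
  assumes "finite C" and "card C > 1"
    and "finite N" and "N \<noteq> {}"
    and "\<forall>i\<in>N. A i \<noteq> {} \<and> A i \<subseteq> C"
    and "\<forall>i\<in>N. card (A i) \<le> 2"
    and "\<forall>c\<in>C. \<forall>d\<in>C. card (supporters N A c) = card (supporters N A d)
                     \<and> real (card (supporters N A c)) \<le> real (card N) / real k"
  shows "mes_seqs N A C k = phragmen_seqs N A C k
         \<and> set ` mes_seqs N A C k = set ` phragmen_seqs N A C k"
proof -
  obtain i c0 where "i \<in> N" "c0 \<in> A i" and c0: "c0 \<in> C"
    using assms(4,5) by blast
  define s where "s = card (supporters N A c0)"
  have "i \<in> supporters N A c0"
    using \<open>i \<in> N\<close> \<open>c0 \<in> A i\<close> by (simp add: supporters_def)
  then have s_pos: "s \<ge> 1"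
    using assms(3) by (simp add: s_def supporters_def Suc_le_eq card_gt_0_iff) blast
  have card_eq: "card (supporters N A c) = s" if "c \<in> C" for c
    using assms(7) that c0 unfolding s_def by metis
  have quota: "real s \<le> real (card N) / real k"
    using assms(7) c0 unfolding s_def by blast
  then have "k > 0"
    using s_pos by (cases k) auto
  with quota have "real (s * k) \<le> real (card N)"
    by (simp add: field_simps)
  then have "s * k \<le> card N"
    by (simp only: of_nat_le_iff)
  then interpret committee_setting N A C s k
    using assms(3) s_pos card_eq \<open>k > 0\<close> by unfold_locales simp_all
  show ?thesis
    using mes_seqs_eq_phragmen_seqs by simp
qed

end
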